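(* Let $d,n\in\mathbb{N}$ be such that $h_c(d,n)$ is finite. For every $\epsilon\in(0,1]$ there exists $\gamma>0$ depending only on $\epsilon$, $d$ and $n$ such that the following holds. Let $B$ be an axis-parallel box in $\mathbb{R}^d$ and $S$ a set of $m$ points in $\mathbb{R}^d$ with $|S|\ge h_c(d,n)$. If at least $\epsilon m$ points of $S$ cannot be covered by any $n$ translated copies of $B$ (i.e., for any $n$ translates of $B$, at least $\epsilon m$ points of $S$ lie outside their union), then at least a $\gamma$ fraction of all $h_c(d,n)$-element subsets of $S$ cannot be covered by any $n$ translated copies of $B$.
   Context: An axis-parallel box in $\mathbb{R}^d$ is a set $[\alpha_1,\beta_1]\times\dots\times[\alpha_d,\beta_d]$. A family is $n$-pierceable if some set of at most $n$ points meets every member. Given families $\mathcal{F}_1,\dots,\mathcal{F}_m$, a colorful $t$-tuple is $(C_1,\dots,C_t)$ with $C_j\in\mathcal{F}_{i_j}$ for pairwise distinct $i_j$. $h_c(d,n)$ denotes the smallest positive integer $h$ such that whenever $\mathcal{F}_1,\dots,\mathcal{F}_h$ are collections of axis-parallel boxes in $\mathbb{R}^d$ with every colorful $h$-tuple $n$-pierceable, some $\mathcal{F}_i$ is $n$-pierceable (e.g. $h_c(1,n)=n+1$, $h_c(d,2)=3d$). *)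

theory Defs
  imports "HOL-Analysis.Analysis"
begin

text \<open>Axis-parallel (closed, nonempty) boxes in R^d, with d = CARD('d).\<close>
definition is_box :: "(real^'d::finite) set \<Rightarrow> bool" where
  "is_box C \<longleftrightarrow> (\<exists>a b. (\<forall>i. a$i \<le> b$i) \<and> C = cbox a b)"

definition pierceable :: "nat \<Rightarrow> ('a set) set \<Rightarrow> bool" where
  "pierceable n F \<longleftrightarrow> (\<exists>P. finite P \<and> card P \<le> n \<and> (\<forall>C\<in>F. P \<inter> C \<noteq> {}))"

definition hc_prop :: "('d::finite) itself \<Rightarrow> nat \<Rightarrow> nat \<Rightarrow> bool" where
  "hc_prop (_::'d itself) n h \<longleftrightarrow>
     (\<forall>F :: nat \<Rightarrow> (real^'d) set set.
        (\<forall>i<h. \<forall>C\<in>F i. is_box C) \<longrightarrow>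
        (\<forall>C :: nat \<Rightarrow> (real^'d) set. (\<forall>i<h. C i \<in> F i) \<longrightarrow> pierceable n (C ` {..<h})) \<longrightarrow>
        (\<exists>i<h. pierceable n (F i)))"

text \<open>h_c(d,n) is finite iff some positive h has the property; then it is the least one.\<close>
definition hc_finite :: "('d::finite) itself \<Rightarrow> nat \<Rightarrow> bool" where
  "hc_finite D n \<longleftrightarrow> (\<exists>h. 0 < h \<and> hc_prop D n h)"

definition hc :: "('d::finite) itself \<Rightarrow> nat \<Rightarrow> nat" where
  "hc D n = (LEAST h. 0 < h \<and> hc_prop D n h)"

definition coverable :: "nat \<Rightarrow> (real^'d) set \<Rightarrow> (real^'d::finite) set \<Rightarrow> bool" where
  "coverable n B T \<longleftrightarrow> (\<exists>V. finite V \<and> card V \<le> n \<and> T \<subseteq> (\<Union>v\<in>V. (\<lambda>x. v + x) ` B))"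

end

theory Submission
  imports Defs
begin

(* Let h = h_c(d,n) and fill an h x k grid with points of S. A row of k points that
   can be covered by n translates of B can also be covered by translates anchored at
   points of the row (push each translate up until its lower faces touch covered
   points), so there are at most k^(nd) candidate coverings, and each of them misses
   at least eps m of the m = |S| choices for every other point of the row. For k large, at
   least half of all grids therefore have no coverable row. Reflecting B turns
   coverability of a point set into pierceability of a family of boxes, so the
   colorful Helly property picks one point per row forming an uncoverable h-set.
   Counting grids through their uncoverable transversals gives
   m^h <= C (N + m^(h-1)) for the number N of uncoverable h-subsets, hence
   N >= gamma (m choose h) once m is large; for small m a single uncoverable
   h-subset suffices. *)

section \<open>Polynomials against geometric sequences\<close>

lemma tendsto_power_mult_geometric_0:
  fixes q :: real
  assumes "0 < q" "q < 1"
  shows "(\<lambda>k. real k ^ p * q ^ k) \<longlonglongrightarrow> 0"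
proof -
  define r where "r = root (Suc p) q"
  have r: "0 < r" "r < 1" "r ^ Suc p = q"
    using assms unfolding r_def by (auto simp del: power_Suc)
  have "(real k * r ^ k) ^ Suc p = real k ^ Suc p * q ^ k" for k
    by (metis r(3) power_mult power_mult_distrib mult.commute)
  moreover have "(\<lambda>k. (real k * r ^ k) ^ Suc p) \<longlonglongrightarrow> 0"
    using tendsto_power[OF powser_times_n_limit_0[of r], of "Suc p"] r by simp
  ultimately have limit: "(\<lambda>k. real k ^ Suc p * q ^ k) \<longlonglongrightarrow> 0"
    by (simp only:)
  show ?thesis
  proof (rule Lim_null_comparison[OF eventually_sequentiallyI limit])
    fix k :: nat assume "1 \<le> k"
    then have "real k ^ p \<le> real k ^ Suc p"
      by (intro power_increasing) auto
    then show "norm (real k ^ p * q ^ k) \<le> real k ^ Suc p * q ^ k"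
      using assms by (simp add: abs_mult mult_right_mono)
  qed
qed

lemma eventually_power_mult_geometric_le:
  fixes r \<delta> :: real
  assumes "0 \<le> r" "r < 1" "0 < \<delta>"
  shows "\<forall>\<^sub>F k in sequentially. real k ^ p * r ^ (k - p) \<le> \<delta>"
proof -
  define q where "q = (1 + r) / 2"
  have q: "0 < q" "q < 1" "r \<le> q"
    using assms by (auto simp: q_def)
  have "\<forall>\<^sub>F k in sequentially. real k ^ p * q ^ k < \<delta> * q ^ p"
    using tendsto_power_mult_geometric_0[OF q(1,2)] assms q by (intro order_tendstoD(2)) auto
  then show ?thesis
    using eventually_ge_at_top[of p]
  proof eventually_elim
    case (elim k)
    have "real k ^ p * r ^ (k - p) * q ^ p \<le> real k ^ p * q ^ (k - p) * q ^ p"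
      using assms q by (intro mult_right_mono mult_left_mono power_mono) auto
    also have "\<dots> = real k ^ p * q ^ k"
      using elim by (simp flip: power_add mult.assoc)
    also have "\<dots> < \<delta> * q ^ p"
      by (fact elim)
    finally show ?case
      using q by simp
  qed
qed

section \<open>Counting maps between finite sets\<close>

lemma card_UN_range_le:
  fixes f :: "nat \<Rightarrow> 'a::finite \<Rightarrow> 'b"
  shows "card (\<Union>j<n. range (f j)) \<le> n * CARD('a)"
proof -
  have "card (\<Union>j<n. range (f j)) \<le> (\<Sum>j<n. card (range (f j)))"
    by (rule card_UN_le) simp
  also have "\<dots> \<le> (\<Sum>j<n. CARD('a))"
    by (intro sum_mono card_image_le) simp
  finally show ?thesis
    by simp
qed

lemma card_PiE_restrict_le:
  fixes I K :: "'i set" and S :: "'a set" and G :: "('i \<Rightarrow> 'a) set"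
    and W :: "('i \<Rightarrow> 'a) \<Rightarrow> 'i \<Rightarrow> 'a set" and c :: "'i \<Rightarrow> real"
  assumes "finite K" "I \<subseteq> K" "finite S" "G \<subseteq> I \<rightarrow>\<^sub>E S"
    and "\<And>g l. g \<in> G \<Longrightarrow> l \<in> K - I \<Longrightarrow> real (card (S \<inter> W g l)) \<le> c l"
  shows "real (card {f \<in> K \<rightarrow>\<^sub>E S. restrict f I \<in> G \<and> (\<forall>l\<in>K - I. f l \<in> W (restrict f I) l)})
    \<le> real (card G) * (\<Prod>l\<in>K - I. c l)"
proof -
  let ?A = "{f \<in> K \<rightarrow>\<^sub>E S. restrict f I \<in> G \<and> (\<forall>l\<in>K - I. f l \<in> W (restrict f I) l)}"
  let ?split = "\<lambda>f. (restrict f I, restrict f (K - I))"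
  let ?P = "Sigma G (\<lambda>g. PiE (K - I) (\<lambda>l. S \<inter> W g l))"
  have "finite G"
    using assms(1-4) by (meson finite_PiE finite_subset)
  then have finite_P: "finite ?P"
    using assms(1,3) by (intro finite_SigmaI finite_PiE) auto
  have "inj_on ?split ?A"
  proof (rule inj_onI)
    fix f g assume "f \<in> ?A" "g \<in> ?A" "?split f = ?split g"
    then show "f = g"
      by (intro PiE_ext[of f K "\<lambda>_. S"]) (auto simp: fun_eq_iff restrict_def, metis)
  qed
  then have "card ?A = card (?split ` ?A)"
    by (simp add: card_image)
  also have "\<dots> \<le> card ?P"
    using assms(2) by (intro card_mono[OF finite_P]) auto
  also have "\<dots> = (\<Sum>g\<in>G. card (PiE (K - I) (\<lambda>l. S \<inter> W g l)))"
    using \<open>finite G\<close> assms(1,3) by (intro card_SigmaI ballI finite_PiE) auto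
  also have "\<dots> = (\<Sum>g\<in>G. \<Prod>l\<in>K - I. card (S \<inter> W g l))"
    using assms(1) by (simp add: card_PiE)
  finally have "real (card ?A) \<le> (\<Sum>g\<in>G. \<Prod>l\<in>K - I. real (card (S \<inter> W g l)))"
    by (simp flip: of_nat_sum of_nat_prod)
  also have "\<dots> \<le> (\<Sum>g\<in>G. \<Prod>l\<in>K - I. c l)"
    using assms(5) by (intro sum_mono prod_mono) auto
  finally show ?thesis
    by simp
qed

lemma card_PiE_eq_le:
  assumes "finite I" "finite S" "x \<in> I" "y \<in> I" "x \<noteq> y"
  shows "card {g \<in> I \<rightarrow>\<^sub>E S. g x = g y} \<le> card S ^ (card I - 1)"
proof -
  let ?I = "I - {y}"
  let ?E = "{g \<in> I \<rightarrow>\<^sub>E S. restrict g ?I \<in> ?I \<rightarrow>\<^sub>E S \<and> (\<forall>l\<in>I - ?I. g l \<in> {restrict g ?I x})}"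
  have "finite (I \<rightarrow>\<^sub>E S)"
    using assms(1,2) by (simp add: finite_PiE)
  then have "finite ?E"
    by (rule rev_finite_subset) auto
  moreover have "{g \<in> I \<rightarrow>\<^sub>E S. g x = g y} \<subseteq> ?E"
    using assms(3,5) by auto
  ultimately have "real (card {g \<in> I \<rightarrow>\<^sub>E S. g x = g y}) \<le> real (card ?E)"
    by (intro of_nat_mono card_mono)
  also have "\<dots> \<le> real (card (?I \<rightarrow>\<^sub>E S)) * (\<Prod>l\<in>I - ?I. 1)"
  proof (rule card_PiE_restrict_le)
    show "real (card (S \<inter> {g x})) \<le> 1" for g :: "'a \<Rightarrow> 'b"
      using card_mono[of "{g x}" "S \<inter> {g x}"] by simp
  qed (use assms(1,2) in auto)
  also have "\<dots> = real (card S ^ (card I - 1))"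
    using assms(1,4) by (simp add: card_PiE)
  finally show ?thesis
    by (simp only: of_nat_le_iff)
qed

lemma card_PiE_not_inj_on_le:
  assumes "finite I" "finite S"
  shows "card {g \<in> I \<rightarrow>\<^sub>E S. \<not> inj_on g I} \<le> card I ^ 2 * card S ^ (card I - 1)"
proof -
  let ?D = "{p \<in> I \<times> I. fst p \<noteq> snd p}"
  have "{g \<in> I \<rightarrow>\<^sub>E S. \<not> inj_on g I} \<subseteq> (\<Union>p\<in>?D. {g \<in> I \<rightarrow>\<^sub>E S. g (fst p) = g (snd p)})"
    unfolding inj_on_def by force
  moreover have "finite (\<Union>p\<in>?D. {g \<in> I \<rightarrow>\<^sub>E S. g (fst p) = g (snd p)})"
    using assms by (auto simp: finite_PiE)
  ultimately have "card {g \<in> I \<rightarrow>\<^sub>E S. \<not> inj_on g I}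
    \<le> card (\<Union>p\<in>?D. {g \<in> I \<rightarrow>\<^sub>E S. g (fst p) = g (snd p)})"
    by (rule card_mono[rotated])
  also have "\<dots> \<le> (\<Sum>p\<in>?D. card {g \<in> I \<rightarrow>\<^sub>E S. g (fst p) = g (snd p)})"
    using assms(1) by (intro card_UN_le) auto
  also have "\<dots> \<le> (\<Sum>p\<in>?D. card S ^ (card I - 1))"
    using assms by (intro sum_mono card_PiE_eq_le) auto
  also have "\<dots> \<le> card I ^ 2 * card S ^ (card I - 1)"
    using card_mono[of "I \<times> I" ?D] assms(1) by (simp add: card_cartesian_product power2_eq_square)
  finally show ?thesis .
qed

lemma card_PiE_image_le:
  fixes I :: "'i set" and S :: "'a set" and P :: "'a set \<Rightarrow> bool"
  assumes "finite I" "finite S" "card I = h"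
  shows "card {g \<in> I \<rightarrow>\<^sub>E S. P (g ` I)}
    \<le> h ^ h * card {T. T \<subseteq> S \<and> card T = h \<and> P T} + h\<^sup>2 * card S ^ (h - 1)"
proof -
  let ?T = "{T. T \<subseteq> S \<and> card T = h \<and> P T}"
  let ?inj = "\<Union>T\<in>?T. I \<rightarrow>\<^sub>E T"
  let ?noninj = "{g \<in> I \<rightarrow>\<^sub>E S. \<not> inj_on g I}"
  have "finite ?T"
    using assms(2) by (auto intro: rev_finite_subset[of "Pow S"])
  have "g \<in> ?inj" if "g \<in> I \<rightarrow>\<^sub>E S" "P (g ` I)" "inj_on g I" for g
  proof -
    have "g ` I \<in> ?T"
      using that assms(3) card_image by fastforce
    then show ?thesis
      using that(1) by blast
  qed
  then have "{g \<in> I \<rightarrow>\<^sub>E S. P (g ` I)} \<subseteq> ?inj \<union> ?noninj"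
    by blast
  moreover have "finite (?inj \<union> ?noninj)"
    using assms(1,2) by (rule rev_finite_subset[OF finite_PiE[of I "\<lambda>_. S"]]) auto
  ultimately have "card {g \<in> I \<rightarrow>\<^sub>E S. P (g ` I)} \<le> card ?inj + card ?noninj"
    by (meson card_Un_le card_mono order_trans)
  moreover have "card ?inj \<le> (\<Sum>T\<in>?T. card (I \<rightarrow>\<^sub>E T))"
    using \<open>finite ?T\<close> by (rule card_UN_le)
  moreover have "(\<Sum>T\<in>?T. card (I \<rightarrow>\<^sub>E T)) = h ^ h * card ?T"
    using assms by (simp add: card_PiE)
  moreover have "card ?noninj \<le> h\<^sup>2 * card S ^ (h - 1)"
    using card_PiE_not_inj_on_le[OF assms(1,2)] assms(3) by simp
  ultimately show ?thesis
    by linarith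
qed

lemma card_PiE_image_subset_le:
  fixes I K :: "'i set" and S :: "'a set" and P :: "'a set \<Rightarrow> bool"
  assumes "finite K" "I \<subseteq> K" "finite S" "card I = h"
  shows "real (card {F \<in> K \<rightarrow>\<^sub>E S. P (F ` I)})
    \<le> (real h ^ h * real (card {T. T \<subseteq> S \<and> card T = h \<and> P T}) + real h ^ 2 * real (card S) ^ (h - 1))
      * real (card S) ^ (card K - h)"
proof -
  let ?G = "{g \<in> I \<rightarrow>\<^sub>E S. P (g ` I)}"
  have "finite I"
    using assms(1,2) by (rule finite_subset[rotated])
  have "finite (K \<rightarrow>\<^sub>E S)"
    using assms(1,3) by (simp add: finite_PiE)
  moreover have "{F \<in> K \<rightarrow>\<^sub>E S. P (F ` I)}
    \<subseteq> {F \<in> K \<rightarrow>\<^sub>E S. restrict F I \<in> ?G \<and> (\<forall>l\<in>K - I. F l \<in> (\<lambda>_ _. UNIV) (restrict F I) l)}"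
    using assms(2) by (auto simp: PiE_iff)
  ultimately have "real (card {F \<in> K \<rightarrow>\<^sub>E S. P (F ` I)})
    \<le> real (card {F \<in> K \<rightarrow>\<^sub>E S. restrict F I \<in> ?G \<and> (\<forall>l\<in>K - I. F l \<in> (\<lambda>_ _. UNIV) (restrict F I) l)})"
    by (intro of_nat_mono card_mono) (auto intro: rev_finite_subset)
  also have "\<dots> \<le> real (card ?G) * (\<Prod>l\<in>K - I. real (card S))"
    using assms(1-3) by (intro card_PiE_restrict_le) auto
  also have "\<dots> \<le> (real h ^ h * real (card {T. T \<subseteq> S \<and> card T = h \<and> P T}) + real h ^ 2 * real (card S) ^ (h - 1))
      * real (card S) ^ (card K - h)"
    using card_PiE_image_le[OF \<open>finite I\<close> assms(3,4), of P] \<open>finite I\<close> assms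
    by (intro mult_mono) (auto simp: card_Diff_subset simp flip: of_nat_power of_nat_mult of_nat_add)
  finally show ?thesis .
qed

lemma card_PiE_confined_le:
  fixes I R K :: "'i set" and S :: "'a set" and W :: "('i \<Rightarrow> 'a) \<Rightarrow> 'i \<Rightarrow> 'a set" and c :: real
  assumes "finite K" "I \<subseteq> R" "R \<subseteq> K" "finite S"
    and "\<And>g l. l \<in> R - I \<Longrightarrow> real (card (S \<inter> W g l)) \<le> c"
  shows "real (card {f \<in> K \<rightarrow>\<^sub>E S. \<forall>l\<in>R - I. f l \<in> W (restrict f I) l})
    \<le> c ^ card (R - I) * real (card S) ^ (card K - card (R - I))"
proof -
  define W' where "W' g l = (if l \<in> R then W g l else UNIV)" for g l
  define c' where "c' l = (if l \<in> R then c else real (card S))" for l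
  have finite: "finite R" "finite I"
    using assms(1-3) by (auto intro: finite_subset)
  have "finite (K \<rightarrow>\<^sub>E S)"
    using assms(1,4) by (simp add: finite_PiE)
  then have "finite {f \<in> K \<rightarrow>\<^sub>E S. restrict f I \<in> I \<rightarrow>\<^sub>E S \<and> (\<forall>l\<in>K - I. f l \<in> W' (restrict f I) l)}"
    by (rule rev_finite_subset) auto
  moreover have "{f \<in> K \<rightarrow>\<^sub>E S. \<forall>l\<in>R - I. f l \<in> W (restrict f I) l}
    \<subseteq> {f \<in> K \<rightarrow>\<^sub>E S. restrict f I \<in> I \<rightarrow>\<^sub>E S \<and> (\<forall>l\<in>K - I. f l \<in> W' (restrict f I) l)}"
    using assms(2,3) by (auto simp: W'_def)
  ultimately have "real (card {f \<in> K \<rightarrow>\<^sub>E S. \<forall>l\<in>R - I. f l \<in> W (restrict f I) l})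
    \<le> real (card {f \<in> K \<rightarrow>\<^sub>E S. restrict f I \<in> I \<rightarrow>\<^sub>E S \<and> (\<forall>l\<in>K - I. f l \<in> W' (restrict f I) l)})"
    by (intro of_nat_mono card_mono)
  also have "\<dots> \<le> real (card (I \<rightarrow>\<^sub>E S)) * (\<Prod>l\<in>K - I. c' l)"
    using assms(2,3,5) by (intro card_PiE_restrict_le[OF assms(1) _ assms(4)]) (auto simp: W'_def c'_def)
  also have "(\<Prod>l\<in>K - I. c' l) = (\<Prod>l\<in>R - I. c' l) * (\<Prod>l\<in>K - R. c' l)"
    using finite assms(1-3) by (subst prod.union_disjoint[symmetric]) (auto intro: prod.cong)
  also have "real (card (I \<rightarrow>\<^sub>E S)) * \<dots>
    = c ^ card (R - I) * real (card S) ^ (card I + card (K - R))"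
    using finite by (simp add: c'_def card_PiE power_add)
  also have "card I + card (K - R) = card K - card (R - I)"
    using finite assms(1-3) card_mono[OF finite(1) assms(2)] card_mono[OF assms(1,3)]
    by (simp add: card_Diff_subset)
  finally show ?thesis .
qed

section \<open>Covering by translates and piercing reflected boxes\<close>

definition refl_box :: "(real^'d::finite) set \<Rightarrow> real^'d \<Rightarrow> (real^'d) set" where
  "refl_box B p = (\<lambda>x. p - x) ` B"

lemma mem_refl_box_iff: "v \<in> refl_box B p \<longleftrightarrow> p \<in> (\<lambda>x. v + x) ` B"
  by (auto simp: refl_box_def image_iff algebra_simps)

lemma is_box_refl_box:
  assumes "is_box B"
  shows "is_box (refl_box B p)"
proof -
  obtain a b where ab: "\<forall>i. a$i \<le> b$i" "B = cbox a b"
    using assms unfolding is_box_def by blast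
  have "refl_box B p = (\<lambda>x. (-1) *\<^sub>R x + p) ` cbox a b"
    unfolding refl_box_def ab(2) by (intro image_cong) auto
  also have "\<dots> = cbox (p - b) (p - a)"
    unfolding image_affinity_cbox using ab(1) interval_ne_empty_cart(1)[of a b] by simp
  finally have "refl_box B p = cbox (p - b) (p - a)" .
  moreover have "\<forall>i. (p - b)$i \<le> (p - a)$i"
    using ab(1) by simp
  ultimately show ?thesis
    unfolding is_box_def by blast
qed

lemma pierceable_refl_box_iff_coverable:
  "pierceable n (refl_box B ` T) \<longleftrightarrow> coverable n B T"
proof -
  have pierce_iff_cover:
    "(\<forall>C\<in>refl_box B ` T. P \<inter> C \<noteq> {}) \<longleftrightarrow> T \<subseteq> (\<Union>v\<in>P. (\<lambda>x. v + x) ` B)" for P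
    unfolding disjoint_iff subset_iff by (simp add: mem_refl_box_iff) blast
  show ?thesis
    by (simp only: pierceable_def coverable_def pierce_iff_cover)
qed

lemma coverable_subset: "coverable n B T \<Longrightarrow> T' \<subseteq> T \<Longrightarrow> coverable n B T'"
  unfolding coverable_def by blast

lemma colorful_uncoverable_choice:
  fixes B :: "(real^'d::finite) set" and R :: "nat \<Rightarrow> (real^'d) set"
  assumes "hc_prop TYPE('d) n h" "is_box B"
    and "\<And>i. i < h \<Longrightarrow> \<not> coverable n B (R i)"
  shows "\<exists>q. (\<forall>i<h. q i \<in> R i) \<and> \<not> coverable n B (q ` {..<h})"
proof -
  define F where "F i = refl_box B ` R i" for i
  have "\<forall>i<h. \<forall>C\<in>F i. is_box C" "\<not> (\<exists>i<h. pierceable n (F i))"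
    using assms(2,3) by (auto simp: F_def is_box_refl_box pierceable_refl_box_iff_coverable)
  then obtain C where C: "\<forall>i<h. C i \<in> F i" "\<not> pierceable n (C ` {..<h})"
    using assms(1) unfolding hc_prop_def by blast
  then have "\<forall>i\<in>{..<h}. \<exists>p. p \<in> R i \<and> C i = refl_box B p"
    by (auto simp: F_def)
  then obtain q where q: "\<forall>i\<in>{..<h}. q i \<in> R i \<and> C i = refl_box B (q i)"
    by metis
  then have "C ` {..<h} = refl_box B ` q ` {..<h}"
    unfolding image_image by (intro image_cong) auto
  then have "\<not> coverable n B (q ` {..<h})"
    using C(2) by (simp add: pierceable_refl_box_iff_coverable)
  then show ?thesis
    using q by blast
qed

definition far_from_coverable :: "real \<Rightarrow> nat \<Rightarrow> (real^'d::finite) set \<Rightarrow> (real^'d) set \<Rightarrow> bool" where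
  "far_from_coverable \<epsilon> n B S \<longleftrightarrow>
     (\<forall>V. finite V \<and> card V \<le> n \<longrightarrow> \<epsilon> * real (card S) \<le> real (card (S - (\<Union>v\<in>V. (\<lambda>x. v + x) ` B))))"

lemma card_covered_le:
  assumes "far_from_coverable \<epsilon> n B S" "finite S" "finite V" "card V \<le> n"
  shows "real (card (S \<inter> (\<Union>v\<in>V. (\<lambda>x. v + x) ` B))) \<le> (1 - \<epsilon>) * real (card S)"
proof -
  have "\<epsilon> * real (card S) \<le> real (card (S - (\<Union>v\<in>V. (\<lambda>x. v + x) ` B)))"
    using assms(1,3,4) unfolding far_from_coverable_def by blast
  moreover have "card S = card (S \<inter> (\<Union>v\<in>V. (\<lambda>x. v + x) ` B)) + card (S - (\<Union>v\<in>V. (\<lambda>x. v + x) ` B))"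
    using assms(2) by (rule card_Int_Diff)
  ultimately show ?thesis
    by (simp add: algebra_simps)
qed

section \<open>Coverable rows\<close>

(* The translate of cbox a b by anchored_shift F a s has, in each coordinate e,
   its lower face through the point F (s e). *)
definition anchored_shift :: "('i \<Rightarrow> real^'d::finite) \<Rightarrow> real^'d \<Rightarrow> ('d \<Rightarrow> 'i) \<Rightarrow> real^'d" where
  "anchored_shift F a s = (\<chi> e. F (s e) $ e - a $ e)"

lemma anchored_shift_arg_min_covers:
  fixes F :: "'i \<Rightarrow> real^'d::finite"
  assumes "finite C" "l \<in> C" "\<forall>l\<in>C. F l - v \<in> cbox a b"
  shows "F l - anchored_shift F a (\<lambda>e. arg_min_on (\<lambda>l. F l $ e) C) \<in> cbox a b"
  unfolding mem_box_cart
proof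
  fix e
  let ?s = "arg_min_on (\<lambda>l. F l $ e) C"
  have s: "?s \<in> C" "F ?s $ e \<le> F l $ e"
    using arg_min_if_finite[of C "\<lambda>l. F l $ e"] assms(1,2) by (auto simp: not_less)
  then have "a $ e \<le> F ?s $ e - v $ e"
    using assms(3) by (auto simp: mem_box_cart)
  moreover have "F l $ e - v $ e \<le> b $ e"
    using assms(2,3) by (auto simp: mem_box_cart)
  ultimately show "a $ e \<le> (F l - anchored_shift F a (\<lambda>e. arg_min_on (\<lambda>l. F l $ e) C)) $ e
      \<and> (F l - anchored_shift F a (\<lambda>e. arg_min_on (\<lambda>l. F l $ e) C)) $ e \<le> b $ e"
    using s(2) by (simp add: anchored_shift_def)
qed

lemma coverable_imp_anchored:
  fixes F :: "'i \<Rightarrow> real^'d::finite"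
  assumes "finite R" "R \<noteq> {}" "coverable n (cbox a b) (F ` R)"
  shows "\<exists>\<sigma>. (\<forall>j e. \<sigma> j e \<in> R) \<and> (\<forall>l\<in>R. \<exists>j<n. F l - anchored_shift F a (\<sigma> j) \<in> cbox a b)"
proof -
  obtain V where V: "finite V" "card V \<le> n" "F ` R \<subseteq> (\<Union>v\<in>V. (\<lambda>x. v + x) ` cbox a b)"
    using assms(3) unfolding coverable_def by blast
  obtain \<nu> where "bij_betw \<nu> {0..<card V} V"
    using ex_bij_betw_nat_finite[OF V(1)] by blast
  then have V_enum: "V \<subseteq> \<nu> ` {..<n}"
    using V(2) by (metis bij_betw_imp_surj_on atLeast0LessThan image_mono lessThan_subset_iff)
  obtain r where r: "r \<in> R"
    using assms(2) by blast
  define Rj where "Rj j = {l \<in> R. F l - \<nu> j \<in> cbox a b}" for j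
  define \<sigma> where "\<sigma> j = (if Rj j = {} then (\<lambda>_. r) else (\<lambda>e. arg_min_on (\<lambda>l. F l $ e) (Rj j)))" for j
  have "finite (Rj j)" for j
    using assms(1) by (simp add: Rj_def)
  have "\<sigma> j e \<in> R" for j e
    using r arg_min_if_finite(1)[OF \<open>finite (Rj j)\<close>] by (auto simp: \<sigma>_def Rj_def)
  moreover have "\<exists>j<n. F l - anchored_shift F a (\<sigma> j) \<in> cbox a b" if l: "l \<in> R" for l
  proof -
    obtain j where j: "j < n" "F l - \<nu> j \<in> cbox a b"
      using l V(3) V_enum by (force simp: algebra_simps)
    then have "l \<in> Rj j"
      using l by (simp add: Rj_def)
    then have "F l - anchored_shift F a (\<sigma> j) \<in> cbox a b"
      using anchored_shift_arg_min_covers[OF \<open>finite (Rj j)\<close>, where v = "\<nu> j"] by (auto simp: \<sigma>_def Rj_def)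
    then show ?thesis
      using j(1) by blast
  qed
  ultimately show ?thesis
    by blast
qed

lemma card_anchored_le:
  fixes S :: "(real^'d::finite) set" and \<sigma> :: "nat \<Rightarrow> 'd \<Rightarrow> 'i"
  assumes "finite K" "R \<subseteq> K" "finite S" "0 \<le> \<epsilon>" "\<epsilon> \<le> 1"
    and far: "far_from_coverable \<epsilon> n (cbox a b) S"
    and \<sigma>: "\<forall>j<n. range (\<sigma> j) \<subseteq> R"
  shows "real (card {F \<in> K \<rightarrow>\<^sub>E S. \<forall>l\<in>R. \<exists>j<n. F l - anchored_shift F a (\<sigma> j) \<in> cbox a b})
    \<le> (1 - \<epsilon>) ^ (card R - n * CARD('d)) * real (card S) ^ card K"
proof -
  define I where "I = (\<Union>j<n. range (\<sigma> j))"
  define W where "W g = (\<Union>v\<in>(\<lambda>j. anchored_shift g a (\<sigma> j)) ` {..<n}. (\<lambda>x. v + x) ` cbox a b)" for g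
  have IR: "I \<subseteq> R"
    using \<sigma> by (auto simp: I_def)
  have "finite I"
    using assms(1,2) IR by (meson finite_subset)
  have card_I: "card I \<le> n * CARD('d)"
    unfolding I_def by (rule card_UN_range_le)
  have shift_eq: "anchored_shift (restrict F I) a (\<sigma> j) = anchored_shift F a (\<sigma> j)" if "j < n" for F j
    using that unfolding anchored_shift_def I_def by (intro arg_cong[where f = vec_lambda] ext) auto
  have "{F \<in> K \<rightarrow>\<^sub>E S. \<forall>l\<in>R. \<exists>j<n. F l - anchored_shift F a (\<sigma> j) \<in> cbox a b}
    \<subseteq> {F \<in> K \<rightarrow>\<^sub>E S. \<forall>l\<in>R - I. F l \<in> W (restrict F I)}"
  proof (rule subsetI, elim CollectE conjE, intro CollectI conjI ballI)
    fix F l assume F: "F \<in> K \<rightarrow>\<^sub>E S" "\<forall>l\<in>R. \<exists>j<n. F l - anchored_shift F a (\<sigma> j) \<in> cbox a b"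
      and l: "l \<in> R - I"
    then obtain j where j: "j < n" "F l - anchored_shift F a (\<sigma> j) \<in> cbox a b"
      by blast
    have "F l = anchored_shift (restrict F I) a (\<sigma> j) + (F l - anchored_shift F a (\<sigma> j))"
      using shift_eq[OF j(1)] by simp
    then show "F l \<in> W (restrict F I)"
      unfolding W_def using j by blast
  qed
  then have "real (card {F \<in> K \<rightarrow>\<^sub>E S. \<forall>l\<in>R. \<exists>j<n. F l - anchored_shift F a (\<sigma> j) \<in> cbox a b})
    \<le> real (card {F \<in> K \<rightarrow>\<^sub>E S. \<forall>l\<in>R - I. F l \<in> W (restrict F I)})"
    using assms(1,3) by (intro of_nat_mono card_mono) (simp_all add: finite_PiE)
  also have "\<dots> \<le> ((1 - \<epsilon>) * real (card S)) ^ card (R - I) * real (card S) ^ (card K - card (R - I))"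
  proof (rule card_PiE_confined_le[OF assms(1) IR assms(2,3)])
    show "real (card (S \<inter> W g)) \<le> (1 - \<epsilon>) * real (card S)" for g
      unfolding W_def using card_image_le[of "{..<n}"] by (intro card_covered_le[OF far assms(3)]) auto
  qed
  also have "\<dots> = (1 - \<epsilon>) ^ card (R - I) * real (card S) ^ card K"
  proof -
    have "card (R - I) \<le> card K"
      using assms(1,2) by (intro card_mono) auto
    then show ?thesis
      by (simp add: power_mult_distrib mult.assoc flip: power_add)
  qed
  also have "(1 - \<epsilon>) ^ card (R - I) \<le> (1 - \<epsilon>) ^ (card R - n * CARD('d))"
    using assms(4,5) IR card_I \<open>finite I\<close> by (intro power_decreasing) (auto simp: card_Diff_subset)
  finally show ?thesis
    using assms(4,5) by (simp add: mult_right_mono)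
qed


lemma card_coverable_row_le:
  fixes S :: "(real^'d::finite) set"
  assumes "finite K" "R \<subseteq> K" "R \<noteq> {}" "finite S" "0 \<le> \<epsilon>" "\<epsilon> \<le> 1"
    and "far_from_coverable \<epsilon> n (cbox a b) S"
  shows "real (card {F \<in> K \<rightarrow>\<^sub>E S. coverable n (cbox a b) (F ` R)})
    \<le> real (card R) ^ (n * CARD('d)) * (1 - \<epsilon>) ^ (card R - n * CARD('d)) * real (card S) ^ card K"
proof -
  let ?\<Sigma> = "{..<n} \<rightarrow>\<^sub>E ((UNIV :: 'd set) \<rightarrow>\<^sub>E R)"
  let ?A = "\<lambda>\<sigma>. {F \<in> K \<rightarrow>\<^sub>E S. \<forall>l\<in>R. \<exists>j<n. F l - anchored_shift F a (\<sigma> j) \<in> cbox a b}"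
  have finite_R: "finite R"
    using assms(1,2) by (rule finite_subset[rotated])
  have "{F \<in> K \<rightarrow>\<^sub>E S. coverable n (cbox a b) (F ` R)} \<subseteq> (\<Union>\<sigma>\<in>?\<Sigma>. ?A \<sigma>)"
  proof (rule subsetI, elim CollectE conjE)
    fix F assume F: "F \<in> K \<rightarrow>\<^sub>E S" "coverable n (cbox a b) (F ` R)"
    obtain \<sigma> where \<sigma>: "\<forall>j e. \<sigma> j e \<in> R" "\<forall>l\<in>R. \<exists>j<n. F l - anchored_shift F a (\<sigma> j) \<in> cbox a b"
      using coverable_imp_anchored[OF finite_R assms(3) F(2)] by blast
    then have "restrict \<sigma> {..<n} \<in> ?\<Sigma>" "F \<in> ?A (restrict \<sigma> {..<n})"
      using F(1) by auto
    then show "F \<in> (\<Union>\<sigma>\<in>?\<Sigma>. ?A \<sigma>)"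
      by blast
  qed
  moreover have "finite (\<Union>\<sigma>\<in>?\<Sigma>. ?A \<sigma>)"
    using finite_PiE[OF assms(1), of "\<lambda>_. S"] assms(4) by (auto intro: rev_finite_subset)
  ultimately have "card {F \<in> K \<rightarrow>\<^sub>E S. coverable n (cbox a b) (F ` R)} \<le> card (\<Union>\<sigma>\<in>?\<Sigma>. ?A \<sigma>)"
    by (rule card_mono[rotated])
  also have "\<dots> \<le> (\<Sum>\<sigma>\<in>?\<Sigma>. card (?A \<sigma>))"
    using finite_R by (intro card_UN_le finite_PiE) auto
  finally have "real (card {F \<in> K \<rightarrow>\<^sub>E S. coverable n (cbox a b) (F ` R)})
    \<le> (\<Sum>\<sigma>\<in>?\<Sigma>. real (card (?A \<sigma>)))"
    by (simp flip: of_nat_sum)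
  also have "\<dots> \<le> (\<Sum>\<sigma>\<in>?\<Sigma>. (1 - \<epsilon>) ^ (card R - n * CARD('d)) * real (card S) ^ card K)"
  proof (rule sum_mono)
    fix \<sigma> assume "\<sigma> \<in> ?\<Sigma>"
    then show "real (card (?A \<sigma>)) \<le> (1 - \<epsilon>) ^ (card R - n * CARD('d)) * real (card S) ^ card K"
      using assms by (intro card_anchored_le) auto
  qed
  also have "\<dots> = real (card R) ^ (n * CARD('d)) * (1 - \<epsilon>) ^ (card R - n * CARD('d)) * real (card S) ^ card K"
    using finite_R by (simp add: card_PiE mult.commute[of n] power_mult)
  finally show ?thesis .
qed

section \<open>Grids of points and uncoverable subsets\<close>

definition uncoverable_subsets :: "nat \<Rightarrow> (real^'d::finite) set \<Rightarrow> (real^'d) set \<Rightarrow> nat \<Rightarrow> (real^'d) set set"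
  where "uncoverable_subsets n B S h = {T. T \<subseteq> S \<and> card T = h \<and> \<not> coverable n B T}"

definition uncoverable_grids ::
    "nat \<Rightarrow> (real^'d::finite) set \<Rightarrow> (real^'d) set \<Rightarrow> nat \<Rightarrow> nat \<Rightarrow> (nat \<times> nat \<Rightarrow> real^'d) set"
  where "uncoverable_grids n B S h k =
    {F \<in> ({..<h} \<times> {..<k}) \<rightarrow>\<^sub>E S. \<forall>i<h. \<not> coverable n B (F ` ({i} \<times> {..<k}))}"

lemma card_uncoverable_grids_ge:
  fixes S :: "(real^'d::finite) set"
  assumes "finite S" "0 \<le> \<epsilon>" "\<epsilon> \<le> 1" "0 < k" "far_from_coverable \<epsilon> n (cbox a b) S"
    and row_bound: "real k ^ (n * CARD('d)) * (1 - \<epsilon>) ^ (k - n * CARD('d)) \<le> 1 / (2 * real h)"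
  shows "real (card S) ^ (h * k) \<le> 2 * real (card (uncoverable_grids n (cbox a b) S h k))"
proof -
  let ?K = "{..<h} \<times> {..<k}"
  let ?bad = "\<lambda>i. {F \<in> ?K \<rightarrow>\<^sub>E S. coverable n (cbox a b) (F ` ({i} \<times> {..<k}))}"
  have finite: "finite (?K \<rightarrow>\<^sub>E S)"
    using assms(1) by (simp add: finite_PiE)
  have bad: "real (card (?bad i)) \<le> real k ^ (n * CARD('d)) * (1 - \<epsilon>) ^ (k - n * CARD('d)) * real (card S) ^ (h * k)"
    if "i < h" for i
  proof -
    have "{i} \<times> {..<k} \<subseteq> ?K" "{i} \<times> {..<k} \<noteq> {}"
      using that assms(4) by auto
    then show ?thesis
      using card_coverable_row_le[of ?K "{i} \<times> {..<k}" S \<epsilon> n a b] assms(1-5)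
      by (simp add: card_cartesian_product)
  qed
  have "?K \<rightarrow>\<^sub>E S \<subseteq> uncoverable_grids n (cbox a b) S h k \<union> (\<Union>i<h. ?bad i)"
    by (auto simp: uncoverable_grids_def)
  moreover have "finite (uncoverable_grids n (cbox a b) S h k \<union> (\<Union>i<h. ?bad i))"
    by (rule rev_finite_subset[OF finite]) (auto simp: uncoverable_grids_def)
  ultimately have "card (?K \<rightarrow>\<^sub>E S) \<le> card (uncoverable_grids n (cbox a b) S h k \<union> (\<Union>i<h. ?bad i))"
    by (rule card_mono[rotated])
  also have "\<dots> \<le> card (uncoverable_grids n (cbox a b) S h k) + card (\<Union>i<h. ?bad i)"
    by (rule card_Un_le)
  also have "card (\<Union>i<h. ?bad i) \<le> (\<Sum>i<h. card (?bad i))"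
    by (rule card_UN_le) simp
  finally have "card (?K \<rightarrow>\<^sub>E S) \<le> card (uncoverable_grids n (cbox a b) S h k) + (\<Sum>i<h. card (?bad i))"
    by simp
  then have "real (card S) ^ (h * k)
    \<le> real (card (uncoverable_grids n (cbox a b) S h k)) + (\<Sum>i<h. real (card (?bad i)))"
    by (simp add: card_PiE card_cartesian_product flip: of_nat_sum of_nat_power of_nat_add)
  also have "(\<Sum>i<h. real (card (?bad i)))
    \<le> real h * (real k ^ (n * CARD('d)) * (1 - \<epsilon>) ^ (k - n * CARD('d))) * real (card S) ^ (h * k)"
    using sum_mono[of "{..<h}", OF bad] by (simp add: mult.assoc)
  also have "\<dots> \<le> 1 / 2 * real (card S) ^ (h * k)"
    using row_bound by (intro mult_right_mono) (cases "h = 0", simp_all add: field_simps)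
  finally show ?thesis
    by simp
qed

lemma uncoverable_grid_transversal:
  fixes B :: "(real^'d::finite) set"
  assumes "hc_prop TYPE('d) n h" "is_box B" "F \<in> uncoverable_grids n B S h k"
  shows "\<exists>j\<in>{..<h} \<rightarrow>\<^sub>E {..<k}. \<not> coverable n B (F ` (\<lambda>i. (i, j i)) ` {..<h})"
proof -
  obtain q where q: "\<forall>i<h. q i \<in> F ` ({i} \<times> {..<k})" "\<not> coverable n B (q ` {..<h})"
    using colorful_uncoverable_choice[OF assms(1,2), of "\<lambda>i. F ` ({i} \<times> {..<k})"] assms(3)
    by (auto simp: uncoverable_grids_def)
  then have "\<forall>i\<in>{..<h}. \<exists>c. c < k \<and> q i = F (i, c)"
    by auto
  then obtain c where c: "\<forall>i\<in>{..<h}. c i < k \<and> q i = F (i, c i)"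
    by metis
  then have "F ` (\<lambda>i. (i, restrict c {..<h} i)) ` {..<h} = q ` {..<h}"
    unfolding image_image by (intro image_cong) auto
  moreover have "restrict c {..<h} \<in> {..<h} \<rightarrow>\<^sub>E {..<k}"
    using c by auto
  ultimately show ?thesis
    using q(2) by metis
qed

lemma card_uncoverable_grids_le:
  fixes B S :: "(real^'d::finite) set"
  assumes "hc_prop TYPE('d) n h" "is_box B" "finite S"
  shows "real (card (uncoverable_grids n B S h k))
    \<le> real k ^ h * (real h ^ h * real (card (uncoverable_subsets n B S h))
      + real h ^ 2 * real (card S) ^ (h - 1)) * real (card S) ^ (h * k - h)"
proof -
  let ?K = "{..<h} \<times> {..<k}"
  let ?J = "{..<h} \<rightarrow>\<^sub>E {..<k}"
  let ?I = "\<lambda>j. (\<lambda>i. (i, j i)) ` {..<h}"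
  let ?A = "\<lambda>j. {F \<in> ?K \<rightarrow>\<^sub>E S. \<not> coverable n B (F ` ?I j)}"
  let ?bound = "(real h ^ h * real (card (uncoverable_subsets n B S h))
      + real h ^ 2 * real (card S) ^ (h - 1)) * real (card S) ^ (h * k - h)"
  have "uncoverable_grids n B S h k \<subseteq> (\<Union>j\<in>?J. ?A j)"
    using uncoverable_grid_transversal[OF assms(1,2)] by (fastforce simp: uncoverable_grids_def)
  moreover have "finite (\<Union>j\<in>?J. ?A j)"
    using finite_PiE[of ?K "\<lambda>_. S"] assms(3) by (auto intro: rev_finite_subset)
  ultimately have "card (uncoverable_grids n B S h k) \<le> card (\<Union>j\<in>?J. ?A j)"
    by (rule card_mono[rotated])
  also have "\<dots> \<le> (\<Sum>j\<in>?J. card (?A j))"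
    by (intro card_UN_le finite_PiE) auto
  finally have "real (card (uncoverable_grids n B S h k)) \<le> (\<Sum>j\<in>?J. real (card (?A j)))"
    by (simp flip: of_nat_sum)
  also have "\<dots> \<le> (\<Sum>j\<in>?J. ?bound)"
  proof (rule sum_mono)
    fix j assume j: "j \<in> ?J"
    have "inj_on (\<lambda>i. (i, j i)) {..<h}"
      by (rule inj_onI) simp
    then have "card (?I j) = h"
      by (simp add: card_image)
    moreover have "?I j \<subseteq> ?K"
      using j by auto
    ultimately show "real (card (?A j)) \<le> ?bound"
      using card_PiE_image_subset_le[of ?K "?I j" S h "\<lambda>T. \<not> coverable n B T"] assms(3)
      by (simp add: uncoverable_subsets_def card_cartesian_product)
  qed
  also have "\<dots> = real k ^ h * ?bound"
    by (simp add: card_PiE)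
  finally show ?thesis
    by (simp only: mult.assoc)
qed

lemma power_card_le_uncoverable_subsets:
  fixes B S :: "(real^'d::finite) set"
  assumes "hc_prop TYPE('d) n h" "is_box B" "finite S" "S \<noteq> {}"
    and "0 \<le> \<epsilon>" "\<epsilon> \<le> 1" "0 < k" "far_from_coverable \<epsilon> n B S"
    and "real k ^ (n * CARD('d)) * (1 - \<epsilon>) ^ (k - n * CARD('d)) \<le> 1 / (2 * real h)"
  shows "real (card S) ^ h \<le> 2 * real k ^ h * real h ^ h * real (card (uncoverable_subsets n B S h))
    + 2 * real k ^ h * real h ^ 2 * real (card S) ^ (h - 1)"
proof -
  obtain a b where B: "B = cbox a b"
    using assms(2) unfolding is_box_def by blast
  have "h * k = h + (h * k - h)"
    using assms(7) by simp
  then have "real (card S) ^ h * real (card S) ^ (h * k - h) = real (card S) ^ (h * k)"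
    by (metis power_add)
  also have "\<dots> \<le> 2 * real (card (uncoverable_grids n B S h k))"
    using card_uncoverable_grids_ge[of S \<epsilon> k n a b h] assms(3-9) B by simp
  also have "\<dots> \<le> (2 * real k ^ h * real h ^ h * real (card (uncoverable_subsets n B S h))
      + 2 * real k ^ h * real h ^ 2 * real (card S) ^ (h - 1)) * real (card S) ^ (h * k - h)"
    using card_uncoverable_grids_le[OF assms(1-3), of k] by (simp add: algebra_simps)
  finally show ?thesis
    using assms(3,4) by (simp add: card_gt_0_iff)
qed

lemma uncoverable_subsets_nonempty:
  fixes B S :: "(real^'d::finite) set"
  assumes "hc_prop TYPE('d) n h" "is_box B" "finite S" "h \<le> card S" "0 < \<epsilon>" "S \<noteq> {}"
    and "far_from_coverable \<epsilon> n B S"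
  shows "uncoverable_subsets n B S h \<noteq> {}"
proof -
  have "\<not> coverable n B S"
  proof
    assume "coverable n B S"
    then obtain V where V: "finite V" "card V \<le> n" "S \<subseteq> (\<Union>v\<in>V. (\<lambda>x. v + x) ` B)"
      unfolding coverable_def by blast
    then have "\<epsilon> * real (card S) \<le> real (card (S - (\<Union>v\<in>V. (\<lambda>x. v + x) ` B)))"
      using assms(7) unfolding far_from_coverable_def by blast
    also have "\<dots> = 0"
      using V(3) by (metis Diff_eq_empty_iff card.empty of_nat_0)
    finally show False
      using assms(3,5,6) by (simp add: mult_le_0_iff card_gt_0_iff)
  qed
  then obtain q where q: "\<forall>i<h. q i \<in> S" "\<not> coverable n B (q ` {..<h})"
    using colorful_uncoverable_choice[OF assms(1,2), of "\<lambda>_. S"] by blast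
  have q_image: "card (q ` {..<h}) \<le> h" "q ` {..<h} \<subseteq> S"
    using card_image_le[of "{..<h}" q] q(1) by auto
  obtain T where T: "q ` {..<h} \<subseteq> T" "T \<subseteq> S" "card T = h"
    using exists_subset_between[OF q_image(1) assms(4) q_image(2) assms(3)] by blast
  have "\<not> coverable n B T"
    using q(2) T(1) by (meson coverable_subset)
  then show ?thesis
    using T(2,3) unfolding uncoverable_subsets_def by blast
qed

lemma binomial_le_of_power_bound:
  fixes a b :: real and m h N :: nat
  assumes "0 < a" "0 \<le> b" "0 < h" "1 \<le> N"
    and "real m ^ h \<le> a * real N + b * real m ^ (h - 1)"
  shows "min (1 / (2 * a)) (1 / (2 * b + 1) ^ h) * real (m choose h) \<le> real N"
proof -
  have "m choose h \<le> m ^ h"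
    by (metis binomial_fact_pow fact_ge_1 mult_le_mono2 mult.right_neutral order_trans)
  then have choose_le: "real (m choose h) \<le> real m ^ h"
    by (simp flip: of_nat_power)
  have min_le: "min (1 / (2 * a)) (1 / (2 * b + 1) ^ h) * real (m choose h) \<le> 1 / (2 * a) * real (m choose h)"
    "min (1 / (2 * a)) (1 / (2 * b + 1) ^ h) * real (m choose h) \<le> 1 / (2 * b + 1) ^ h * real (m choose h)"
    by (intro mult_right_mono; simp)+
  show ?thesis
  proof (cases "2 * b \<le> real m")
    case True
    have "b * real m ^ (h - 1) \<le> real m / 2 * real m ^ (h - 1)"
      using True by (intro mult_right_mono) auto
    also have "\<dots> = real m ^ h / 2"
      using assms(3) by (simp add: power_eq_if)
    finally have "real m ^ h \<le> 2 * a * real N"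
      using assms(5) by simp
    then have "real (m choose h) \<le> 2 * a * real N"
      using choose_le by linarith
    then have "1 / (2 * a) * real (m choose h) \<le> real N"
      using assms(1) by (simp add: field_simps)
    then show ?thesis
      using min_le(1) by linarith
  next
    case False
    have "real m ^ h \<le> (2 * b + 1) ^ h"
      using False by (intro power_mono) auto
    then have "real (m choose h) \<le> (2 * b + 1) ^ h"
      using choose_le by linarith
    then have "1 / (2 * b + 1) ^ h * real (m choose h) \<le> 1"
      using assms(2) by (simp add: field_simps)
    then show ?thesis
      using min_le(2) assms(4) by linarith
  qed
qed

lemma hc_prop_hc:
  assumes "hc_finite D n"
  shows "0 < hc D n" "hc_prop D n (hc D n)"
  using LeastI_ex[OF assms[unfolded hc_finite_def]] unfolding hc_def by auto

lemma card_uncoverable_subsets_ge: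
  fixes B S :: "(real^'d::finite) set"
  assumes "hc_prop TYPE('d) n h" "0 < h" "0 < \<epsilon>" "\<epsilon> \<le> 1" "0 < k"
    and "real k ^ (n * CARD('d)) * (1 - \<epsilon>) ^ (k - n * CARD('d)) \<le> 1 / (2 * real h)"
    and "is_box B" "finite S" "h \<le> card S" "far_from_coverable \<epsilon> n B S"
  shows "min (1 / (4 * real k ^ h * real h ^ h)) (1 / (4 * real k ^ h * real h ^ 2 + 1) ^ h)
      * real (card S choose h)
    \<le> real (card (uncoverable_subsets n B S h))"
proof -
  have "S \<noteq> {}"
    using assms(2,9) by auto
  then have "1 \<le> card (uncoverable_subsets n B S h)"
    using uncoverable_subsets_nonempty[OF assms(1,7,8,9,3) _ assms(10)] assms(8)
    by (simp add: Suc_le_eq card_gt_0_iff uncoverable_subsets_def)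
  moreover have "real (card S) ^ h \<le> (2 * real k ^ h * real h ^ h) * real (card (uncoverable_subsets n B S h))
    + (2 * real k ^ h * real h ^ 2) * real (card S) ^ (h - 1)"
    using power_card_le_uncoverable_subsets[OF assms(1,7,8) \<open>S \<noteq> {}\<close> _ assms(4,5,10,6)] assms(3)
    by simp
  ultimately show ?thesis
    using binomial_le_of_power_bound[of "2 * real k ^ h * real h ^ h" "2 * real k ^ h * real h ^ 2"] assms(2,5)
    by (simp add: mult.assoc)
qed

theorem lemma6:
  fixes n :: nat
  assumes "hc_finite TYPE('d::finite) n"
  shows "\<forall>\<epsilon>::real. 0 < \<epsilon> \<and> \<epsilon> \<le> 1 \<longrightarrow>
     (\<exists>\<gamma>::real. \<gamma> > 0 \<and>
        (\<forall>(B :: (real^'d) set) (S :: (real^'d) set).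
           is_box B \<longrightarrow> finite S \<longrightarrow> card S \<ge> hc TYPE('d) n \<longrightarrow>
           (\<forall>V. finite V \<and> card V \<le> n \<longrightarrow>
               real (card (S - (\<Union>v\<in>V. (\<lambda>x. v + x) ` B))) \<ge> \<epsilon> * real (card S)) \<longrightarrow>
           real (card {T. T \<subseteq> S \<and> card T = hc TYPE('d) n \<and> \<not> coverable n B T})
             \<ge> \<gamma> * real (card S choose hc TYPE('d) n)))"
proof -
  define h where "h = hc TYPE('d) n"
  have h: "0 < h" "hc_prop TYPE('d) n h"
    using hc_prop_hc[OF assms] by (simp_all add: h_def)
  have "\<exists>\<gamma>>0. \<forall>(B :: (real^'d) set) S. is_box B \<longrightarrow> finite S \<longrightarrow> h \<le> card S \<longrightarrow> far_from_coverable \<epsilon> n B S \<longrightarrow>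
      \<gamma> * real (card S choose h) \<le> real (card (uncoverable_subsets n B S h))"
    if \<epsilon>: "0 < \<epsilon>" "\<epsilon> \<le> 1" for \<epsilon>
  proof -
    have "\<forall>\<^sub>F k in sequentially.
      0 < k \<and> real k ^ (n * CARD('d)) * (1 - \<epsilon>) ^ (k - n * CARD('d)) \<le> 1 / (2 * real h)"
      using \<epsilon> h(1) by (intro eventually_conj eventually_gt_at_top eventually_power_mult_geometric_le) auto
    then obtain k where k: "0 < k"
      "real k ^ (n * CARD('d)) * (1 - \<epsilon>) ^ (k - n * CARD('d)) \<le> 1 / (2 * real h)"
      unfolding eventually_sequentially by blast
    show ?thesis
    proof (intro exI[of _ "min (1 / (4 * real k ^ h * real h ^ h)) (1 / (4 * real k ^ h * real h ^ 2 + 1) ^ h)"]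
        conjI allI impI)
      show "min (1 / (4 * real k ^ h * real h ^ h)) (1 / (4 * real k ^ h * real h ^ 2 + 1) ^ h) > 0"
        using h(1) k(1) by (simp add: add_nonneg_pos)
    qed (use card_uncoverable_subsets_ge[OF h(2,1) \<epsilon> k] in blast)
  qed
  then show ?thesis
    unfolding h_def far_from_coverable_def uncoverable_subsets_def by blast
qed

end
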